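(* Fix an ordinal $\beta\leq\omega_1$ and consider $\mathbb{S}(\beta)$ with $\Lambda=\{A\subseteq I\times\beta: A_0\in\mathcal{B}(I),\ A_\alpha\in\{\emptyset,I\}\ \forall\,0<\alpha<\beta\}$. For every ordinal $\xi$: (i) if $\xi\leq\eta<\beta$, then every $\eta$-section of a member of $\mathcal{G}^\xi(\Lambda)$ is a Borel subset of $I$; (ii) if $\xi<\zeta+1<\beta$, then every $(\zeta+1)$-section of a member of $\mathcal{G}^\xi(\Lambda)$ is $\emptyset$ or $I$.
   Context: An LMP is $(S,\Sigma,\{\tau_a\}_{a\in L})$ with $L$ countable and Markov kernels $\tau_a$. $\Sigma(R)$ = $R$-closed members of $\Sigma$ ($A$ is $R$-closed if $x\in A$, $xRs\Rightarrow s\in A$); $\mathcal{R}^T(\Lambda)=\{(s,t):\forall a\,\forall E\in\Lambda\ \tau_a(s,E)=\tau_a(t,E)\}$; $\mathcal{G}(\Lambda)=\Sigma(\mathcal{R}^T(\Lambda))$, with $\mathcal{G}^0(\Lambda)=\Lambda$, $\mathcal{G}^{\alpha+1}(\Lambda)=\mathcal{G}(\mathcal{G}^\alpha(\Lambda))$, $\mathcal{G}^\lambda(\Lambda)=\sigma(\bigcup_{\alpha<\lambda}\mathcal{G}^\alpha(\Lambda))$ for limit $\lambda$. The processes $\mathbb{S}(\beta)$: $I=(0,1)$, $\mathfrak{m}$ Lebesgue measure, $V\subseteq I$ Lebesgue nonmeasurable, $\mathcal{B}_V=\sigma(\mathcal{B}(I)\cup\{V\})$, and $\mathfrak{m}_0,\mathfrak{m}_1$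 measures on $\mathcal{B}_V$ extending $\mathfrak{m}$ with $\mathfrak{m}_0(V)\neq\mathfrak{m}_1(V)$. Let $\{q_n\}_{n\in\omega}$ enumerate $\mathbb{Q}\cap I$. For ordinals $\eta$: $\alpha_n(0)=0$, $\alpha_n(\zeta+1)=\zeta$ for all $n$, and for limit $\lambda$, $(\alpha_n(\lambda))_{n\in\omega}$ is a fixed strictly increasing sequence of nonzero ordinals below $\lambda$ cofinal in $\lambda$. For an ordinal $\beta\leq\omega_1$, $\mathbb{S}(\beta)=(I\times\beta,\ \mathcal{B}_V\otimes\mathcal{P}(\beta),\ \{\tau_n\}_{n\in\omega})$ with $\tau_n((x,\eta),A)=x\cdot\mathfrak{m}_0(A_0)$ if $\eta=0$; $=\mathfrak{m}_0(A_{\alpha_n(\eta)})$ if $\eta>0$ and $x<q_n$; $=\mathfrak{m}_1(A_{\alpha_n(\eta)})$ if $\eta>0$ and $x\geq q_n$; here $A_\gamma=\{r:(r,\gamma)\in A\}$. These $\tau_n$ are Markov kernels, so $\mathbb{S}(\beta)$ is an LMP. *)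

theory Defs
  imports "HOL-Analysis.Analysis"
begin

text \<open>The ordinal beta is represented by a well-ordered type 'b (its elements are the
ordinals below beta).  The state space of S(beta) is I \<times> beta.\<close>

definition unit_ival :: "real set" where
  "unit_ival = {0<..<1}"

definition ord0 :: "'b::wellorder" where
  "ord0 = (LEAST x. True)"

definition is_succ_of :: "'b::wellorder \<Rightarrow> 'b \<Rightarrow> bool" where
  "is_succ_of eta zeta \<longleftrightarrow> zeta < eta \<and> \<not> (\<exists>g. zeta < g \<and> g < eta)"

definition is_limit :: "'b::wellorder \<Rightarrow> bool" where
  "is_limit l \<longleftrightarrow> l \<noteq> ord0 \<and> \<not> (\<exists>z. is_succ_of l z)"

definition sect :: "(real \<times> 'b) set \<Rightarrow> 'b \<Rightarrow> real set" where
  "sect A g = {r. (r, g) \<in> A}"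

definition BV :: "real set \<Rightarrow> real set set" where
  "BV V = sigma_sets unit_ival ({B \<in> sets borel. B \<subseteq> unit_ival} \<union> {V})"

definition SS :: "(real \<times> 'b) set" where
  "SS = unit_ival \<times> UNIV"

definition Sigma_S :: "real measure \<Rightarrow> (real \<times> 'b) set set" where
  "Sigma_S M0 = sets (M0 \<Otimes>\<^sub>M count_space (UNIV :: 'b set))"

definition tau :: "real measure \<Rightarrow> real measure \<Rightarrow> (nat \<Rightarrow> real) \<Rightarrow> (nat \<Rightarrow> 'b::wellorder \<Rightarrow> 'b)
    \<Rightarrow> nat \<Rightarrow> real \<times> 'b \<Rightarrow> (real \<times> 'b) set \<Rightarrow> real" where
  "tau M0 M1 q alpha n s A =
     (let x = fst s; eta = snd s in
      if eta = ord0 then x * measure M0 (sect A ord0)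
      else if x < q n then measure M0 (sect A (alpha n eta))
      else measure M1 (sect A (alpha n eta)))"

definition RT :: "real measure \<Rightarrow> real measure \<Rightarrow> (nat \<Rightarrow> real) \<Rightarrow> (nat \<Rightarrow> 'b::wellorder \<Rightarrow> 'b)
    \<Rightarrow> (real \<times> 'b) set set \<Rightarrow> ((real \<times> 'b) \<times> (real \<times> 'b)) set" where
  "RT M0 M1 q alpha L = {(s, t). s \<in> SS \<and> t \<in> SS \<and>
      (\<forall>n. \<forall>E\<in>L. tau M0 M1 q alpha n s E = tau M0 M1 q alpha n t E)}"

definition closed_sets :: "(real \<times> 'b) set set \<Rightarrow> ((real \<times> 'b) \<times> (real \<times> 'b)) set
    \<Rightarrow> (real \<times> 'b) set set" where
  "closed_sets Sig R = {A \<in> Sig. \<forall>x s. x \<in> A \<and> (x, s) \<in> R \<longrightarrow> s \<in> A}"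

definition Gop :: "real measure \<Rightarrow> real measure \<Rightarrow> (nat \<Rightarrow> real) \<Rightarrow> (nat \<Rightarrow> 'b::wellorder \<Rightarrow> 'b)
    \<Rightarrow> (real \<times> 'b) set set \<Rightarrow> (real \<times> 'b) set set" where
  "Gop M0 M1 q alpha L = closed_sets (Sigma_S M0) (RT M0 M1 q alpha L)"

definition Giter :: "real measure \<Rightarrow> real measure \<Rightarrow> (nat \<Rightarrow> real) \<Rightarrow> (nat \<Rightarrow> 'b::wellorder \<Rightarrow> 'b)
    \<Rightarrow> (real \<times> 'b) set set \<Rightarrow> 'b \<Rightarrow> (real \<times> 'b) set set" where
  "Giter M0 M1 q alpha L = wfrec {(x, y). x < y}
     (\<lambda>f xi. if xi = ord0 then L
             else if (\<exists>z. is_succ_of xi z) then Gop M0 M1 q alpha (f (THE z. is_succ_of xi z))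
             else sigma_sets SS (\<Union>g\<in>{g. g < xi}. f g))"

definition Lambda0 :: "(real \<times> 'b::wellorder) set set" where
  "Lambda0 = {A. A \<subseteq> SS \<and> sect A ord0 \<in> sets borel \<and>
      (\<forall>a. a \<noteq> ord0 \<longrightarrow> sect A a = {} \<or> sect A a = unit_ival)}"

end

theory Submission
  imports Defs
begin

text \<open>At a successor xi = z + 1, two points (x, e) and
  (y, e) of a level e \<ge> xi are R^T(G^z(Lambda))-related unless some cut q n with alpha n e < z
  separates x from y: for alpha n e \<ge> z the sections of G^z(Lambda) are Borel, where M0 and M1
  agree. For e = zeta + 1 no index is exceptional, so the e-section is empty or all of I; for a
  limit e only finitely many indices are, because alpha n e is increasing and cofinal in e, so the
  section is a finite union of intervals. At limit stages sections commute with the countable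
  operations generating sigma_sets.\<close>

lemma is_succ_of_less: "is_succ_of e z \<Longrightarrow> z < e"
  unfolding is_succ_of_def by simp

lemma is_succ_of_unique: "is_succ_of e z \<Longrightarrow> is_succ_of e z' \<Longrightarrow> z = z'"
  unfolding is_succ_of_def by (metis linorder_neqE)

lemma is_succ_of_le_pred: "is_succ_of e z \<Longrightarrow> g < e \<Longrightarrow> g \<le> z"
  unfolding is_succ_of_def by (metis leI)

lemma ord0_le: "ord0 \<le> (x::'a::wellorder)"
  unfolding ord0_def by (rule Least_le) simp

lemma ord0_succ_or_limit:
  obtains "xi = ord0" | z where "is_succ_of xi z" | "is_limit xi"
  unfolding is_limit_def by blast

lemma alpha_eventually_ge:
  fixes alpha :: "nat \<Rightarrow> 'b::wellorder \<Rightarrow> 'b"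
  assumes alpha_succ: "\<And>n e z. is_succ_of e z \<Longrightarrow> alpha n e = z"
    and alpha_mono: "\<And>l. is_limit l \<Longrightarrow> mono (\<lambda>n. alpha n l)"
    and alpha_cofinal: "\<And>l g. is_limit l \<Longrightarrow> g < l \<Longrightarrow> \<exists>n. g \<le> alpha n l"
    and "g < e"
  shows "\<exists>m. \<forall>n\<ge>m. g \<le> alpha n e"
proof (cases e rule: ord0_succ_or_limit)
  case 1
  then show ?thesis
    using \<open>g < e\<close> ord0_le[of g] by simp
next
  case (2 z)
  then show ?thesis
    using \<open>g < e\<close> alpha_succ is_succ_of_le_pred by metis
next
  case 3
  then obtain m where "g \<le> alpha m e"
    using alpha_cofinal \<open>g < e\<close> by blast
  then show ?thesis
    using alpha_mono[OF 3] by (meson monoD order_trans)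
qed

lemma Giter_cut:
  "Giter M0 M1 q alpha L xi = (if xi = ord0 then L
     else if \<exists>z. is_succ_of xi z
       then Gop M0 M1 q alpha (cut (Giter M0 M1 q alpha L) {(x, y). x < y} xi (THE z. is_succ_of xi z))
     else sigma_sets SS (\<Union>g\<in>{g. g < xi}. cut (Giter M0 M1 q alpha L) {(x, y). x < y} xi g))"
  unfolding Giter_def by (rule wfrec[OF wf])

lemma Giter_ord0: "Giter M0 M1 q alpha L ord0 = L"
  by (subst Giter_cut) simp

lemma Giter_succ:
  assumes "is_succ_of xi z"
  shows "Giter M0 M1 q alpha L xi = Gop M0 M1 q alpha (Giter M0 M1 q alpha L z)"
proof -
  have "z < xi"
    using assms by (rule is_succ_of_less)
  moreover have "xi \<noteq> ord0"
    using \<open>z < xi\<close> ord0_le[of z] by auto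
  moreover have "(THE z. is_succ_of xi z) = z"
    using assms is_succ_of_unique by blast
  ultimately show ?thesis
    using assms by (subst Giter_cut) (auto simp: cut_apply)
qed

lemma Giter_limit:
  assumes "is_limit xi"
  shows "Giter M0 M1 q alpha L xi = sigma_sets SS (\<Union>g\<in>{g. g < xi}. Giter M0 M1 q alpha L g)"
proof -
  have "(\<Union>g\<in>{g. g < xi}. cut (Giter M0 M1 q alpha L) {(x, y). x < y} xi g)
      = (\<Union>g\<in>{g. g < xi}. Giter M0 M1 q alpha L g)"
    by (intro SUP_cong) (auto simp: cut_apply)
  then show ?thesis
    using assms unfolding is_limit_def by (subst Giter_cut) auto
qed

lemma sect_Times_UNIV: "sect (\<Omega> \<times> UNIV) e = \<Omega>"
  unfolding sect_def by auto

lemma sect_Diff: "sect (X - Y) e = sect X e - sect Y e"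
  unfolding sect_def by auto

lemma sect_UN: "sect (\<Union>i. A i) e = (\<Union>i. sect (A i) e)"
  unfolding sect_def by auto

lemma sect_subset: "A \<subseteq> SS \<Longrightarrow> sect A e \<subseteq> unit_ival"
  unfolding SS_def sect_def by auto

lemma sect_sigma_sets:
  assumes S: "sigma_algebra \<Omega> S" and X: "\<And>A. A \<in> X \<Longrightarrow> sect A e \<in> S"
    and B: "B \<in> sigma_sets (\<Omega> \<times> UNIV) X"
  shows "sect B e \<in> S"
proof -
  interpret sigma_algebra \<Omega> S by (rule S)
  show ?thesis
    using B
  proof (induction rule: sigma_sets.induct)
    case (Basic A)
    then show ?case by (rule X)
  next
    case Empty
    then show ?case by (simp add: sect_def)
  next
    case (Compl A)
    then show ?case by (simp add: sect_Diff sect_Times_UNIV compl_sets)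
  next
    case (Union A)
    then show ?case by (auto simp: sect_UN)
  qed
qed

lemma sets_restrict_borel_ival:
  "B \<in> sets (restrict_space borel unit_ival) \<longleftrightarrow> B \<in> sets borel \<and> B \<subseteq> unit_ival"
  by (auto simp: sets_restrict_space_iff unit_ival_def)

lemma sigma_algebra_restrict_borel_ival:
  "sigma_algebra unit_ival (sets (restrict_space borel unit_ival))"
  using sets.sigma_algebra_axioms[of "restrict_space borel unit_ival"]
  by (simp add: space_restrict_space)

lemma borel_if_saturated_by_cuts:
  fixes q :: "nat \<Rightarrow> real" and m :: nat
  assumes \<Omega>: "\<Omega> \<in> sets borel" and S: "S \<subseteq> \<Omega>"
    and saturated: "\<And>x y. x \<in> S \<Longrightarrow> y \<in> \<Omega> \<Longrightarrow> \<forall>n<m. x < q n \<longleftrightarrow> y < q n \<Longrightarrow> y \<in> S"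
  shows "S \<in> sets borel"
proof -
  define pattern where "pattern x = {n. n < m \<and> x < q n}" for x
  define cell where "cell T = \<Omega> \<inter> {y. \<forall>n<m. y < q n \<longleftrightarrow> n \<in> T}" for T
  have "S = (\<Union>T\<in>pattern ` S. cell T)"
    using S saturated by (auto simp: cell_def pattern_def)
  moreover have "finite (pattern ` S)"
    by (rule finite_subset[of _ "Pow {..<m}"]) (auto simp: pattern_def)
  moreover have "cell T \<in> sets borel" for T
    unfolding cell_def using \<Omega> by measurable
  ultimately show ?thesis
    by (metis sets.finite_UN)
qed

lemma Gop_subset_SS: "space M0 = unit_ival \<Longrightarrow> A \<in> Gop M0 M1 q alpha F \<Longrightarrow> A \<subseteq> SS"
  unfolding Gop_def closed_sets_def Sigma_S_def
  using sets.sets_into_space[of A "M0 \<Otimes>\<^sub>M count_space UNIV"]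
  by (auto simp: space_pair_measure SS_def)

text \<open>At a nonzero level e the kernel tau n only sees the side of q n on which the point
  lies and the measure of the alpha n e-section.\<close>
lemma Gop_closed_along_level:
  assumes M0: "space M0 = unit_ival" and A: "A \<in> Gop M0 M1 q alpha F"
    and e: "e \<noteq> ord0" and x: "(x, e) \<in> A" and y: "y \<in> unit_ival"
    and xy: "\<And>n. (x < q n \<longleftrightarrow> y < q n) \<or>
      (\<forall>E\<in>F. measure M0 (sect E (alpha n e)) = measure M1 (sect E (alpha n e)))"
  shows "(y, e) \<in> A"
proof -
  have "(x, e) \<in> SS"
    using x Gop_subset_SS[OF M0 A] by blast
  moreover have "(y, e) \<in> SS"
    using y by (simp add: SS_def)
  moreover have "tau M0 M1 q alpha n (x, e) E = tau M0 M1 q alpha n (y, e) E" if "E \<in> F" for n E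
    using e xy[of n] that unfolding tau_def Let_def by auto
  ultimately have "((x, e), (y, e)) \<in> RT M0 M1 q alpha F"
    unfolding RT_def by blast
  then show ?thesis
    using A x unfolding Gop_def closed_sets_def by blast
qed

definition regular_sections :: "'b::wellorder \<Rightarrow> (real \<times> 'b) set set \<Rightarrow> bool" where
  "regular_sections xi F \<longleftrightarrow> (\<forall>A\<in>F.
     (\<forall>e. xi \<le> e \<longrightarrow> sect A e \<in> sets (restrict_space borel unit_ival)) \<and>
     (\<forall>e z. is_succ_of e z \<and> xi < e \<longrightarrow> sect A e \<in> {{}, unit_ival}))"

lemma regular_sections_Lambda0: "regular_sections ord0 Lambda0"
  unfolding regular_sections_def
proof (intro ballI conjI allI impI)
  fix A :: "(real \<times> 'b::wellorder) set" and e assume A: "A \<in> Lambda0"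
  have "sect A e \<in> sets borel"
    using A by (cases "e = ord0") (auto simp: Lambda0_def unit_ival_def)
  then show "sect A e \<in> sets (restrict_space borel unit_ival)"
    using A by (simp add: sets_restrict_borel_ival sect_subset Lambda0_def)
  show "sect A e \<in> {{}, unit_ival}" if "is_succ_of e z \<and> ord0 < e" for z
  proof -
    have "e \<noteq> ord0"
      using that by blast
    then show ?thesis
      using A unfolding Lambda0_def by blast
  qed
qed

lemma regular_sections_sigma_sets:
  assumes F: "\<And>g. g < xi \<Longrightarrow> regular_sections g (F g)"
  shows "regular_sections xi (sigma_sets SS (\<Union>g\<in>{g. g < xi}. F g))"
  unfolding regular_sections_def
proof (intro ballI conjI allI impI)
  fix A assume "A \<in> sigma_sets SS (\<Union>g\<in>{g. g < xi}. F g)"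
  then have A: "A \<in> sigma_sets (unit_ival \<times> UNIV) (\<Union>g\<in>{g. g < xi}. F g)"
    by (simp add: SS_def)
  fix e
  show "sect A e \<in> sets (restrict_space borel unit_ival)" if "xi \<le> e"
  proof (rule sect_sigma_sets[OF sigma_algebra_restrict_borel_ival _ A])
    fix B assume "B \<in> (\<Union>g\<in>{g. g < xi}. F g)"
    then obtain g where "g < xi" "B \<in> F g" by blast
    moreover have "g \<le> e"
      using \<open>g < xi\<close> that by simp
    ultimately show "sect B e \<in> sets (restrict_space borel unit_ival)"
      using F[of g] unfolding regular_sections_def by blast
  qed
  show "sect A e \<in> {{}, unit_ival}" if "is_succ_of e z \<and> xi < e" for z
  proof (rule sect_sigma_sets[OF sigma_algebra_trivial _ A])
    fix B assume "B \<in> (\<Union>g\<in>{g. g < xi}. F g)"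
    then obtain g where "g < xi" "B \<in> F g" by blast
    moreover have "g < e"
      using \<open>g < xi\<close> that by (blast intro: less_trans)
    ultimately show "sect B e \<in> {{}, unit_ival}"
      using F[of g] that unfolding regular_sections_def by blast
  qed
qed

text \<open>Where the induction hypothesis enters: Borel sections at the levels alpha n e \<ge> z get
  the same measure under M0 and M1, so only the finitely many cuts q n with n < m can separate
  points of level e.\<close>
lemma Gop_sect_saturated:
  assumes M0: "space M0 = unit_ival"
    and agree: "\<And>B. B \<in> sets (restrict_space borel unit_ival) \<Longrightarrow> measure M0 B = measure M1 B"
    and F: "regular_sections z F" and A: "A \<in> Gop M0 M1 q alpha F" and e: "e \<noteq> ord0"
    and m: "\<And>n. m \<le> n \<Longrightarrow> z \<le> alpha n e"
    and x: "x \<in> sect A e" and y: "y \<in> unit_ival" and xy: "\<forall>n<m. x < q n \<longleftrightarrow> y < q n"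
  shows "y \<in> sect A e"
proof -
  have "(y, e) \<in> A"
  proof (rule Gop_closed_along_level[OF M0 A e _ y])
    show "(x, e) \<in> A"
      using x by (simp add: sect_def)
    fix n
    show "(x < q n \<longleftrightarrow> y < q n) \<or>
      (\<forall>E\<in>F. measure M0 (sect E (alpha n e)) = measure M1 (sect E (alpha n e)))"
      using xy m[of n] F agree unfolding regular_sections_def by (meson not_le)
  qed
  then show ?thesis
    by (simp add: sect_def)
qed

lemma regular_sections_Gop:
  fixes alpha :: "nat \<Rightarrow> 'b::wellorder \<Rightarrow> 'b"
  assumes M0: "space M0 = unit_ival"
    and agree: "\<And>B. B \<in> sets (restrict_space borel unit_ival) \<Longrightarrow> measure M0 B = measure M1 B"
    and eventually_above: "\<And>g e. g < e \<Longrightarrow> \<exists>m. \<forall>n\<ge>m. g \<le> alpha n e"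
    and alpha_succ: "\<And>n e z. is_succ_of e z \<Longrightarrow> alpha n e = z"
    and F: "regular_sections z F" and xi: "is_succ_of xi z"
  shows "regular_sections xi (Gop M0 M1 q alpha F)"
  unfolding regular_sections_def
proof (intro ballI conjI allI impI)
  fix A assume A: "A \<in> Gop M0 M1 q alpha F"
  have sub: "sect A e \<subseteq> unit_ival" for e
    using sect_subset[OF Gop_subset_SS[OF M0 A]] .
  have saturated: "y \<in> sect A e"
    if "z < e" "\<And>n. m \<le> n \<Longrightarrow> z \<le> alpha n e" "x \<in> sect A e" "y \<in> unit_ival"
      "\<forall>n<m. x < q n \<longleftrightarrow> y < q n" for e m x y
  proof (rule Gop_sect_saturated[OF M0 agree F A _ that(2-)])
    show "e \<noteq> ord0"
      using \<open>z < e\<close> ord0_le[of z] by auto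
  qed
  fix e
  show "sect A e \<in> sets (restrict_space borel unit_ival)" if "xi \<le> e"
  proof -
    have "z < e"
      using is_succ_of_less[OF xi] that by simp
    then obtain m where "\<And>n. m \<le> n \<Longrightarrow> z \<le> alpha n e"
      using eventually_above by blast
    then have "sect A e \<in> sets borel"
      using borel_if_saturated_by_cuts[of unit_ival "sect A e" m q] \<open>z < e\<close> sub saturated
      by (simp add: unit_ival_def)
    then show ?thesis
      using sub by (simp add: sets_restrict_borel_ival)
  qed
  show "sect A e \<in> {{}, unit_ival}" if "is_succ_of e z' \<and> xi < e" for z'
  proof -
    have "z < z'"
      using is_succ_of_less[OF xi] is_succ_of_le_pred[of e z' xi] that by simp
    moreover have "z' < e"
      using is_succ_of_less that by blast
    ultimately have "z < e" "\<And>n. z \<le> alpha n e"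
      using alpha_succ that by auto
    then have "\<And>x y. x \<in> sect A e \<Longrightarrow> y \<in> unit_ival \<Longrightarrow> y \<in> sect A e"
      using saturated[of e 0] by simp
    then show ?thesis
      using sub by blast
  qed
qed

theorem lemma5p6:
  fixes V :: "real set" and M0 M1 :: "real measure" and q :: "nat \<Rightarrow> real"
    and alpha :: "nat \<Rightarrow> 'b::wellorder \<Rightarrow> 'b"
  assumes beta_le_omega1: "\<forall>eta::'b. countable {g. g < eta}"
    and V_sub: "V \<subseteq> unit_ival"
    and V_nonmeas: "V \<notin> sets lebesgue"
    and M0_space: "space M0 = unit_ival" and M0_sets: "sets M0 = BV V"
    and M1_space: "space M1 = unit_ival" and M1_sets: "sets M1 = BV V"
    and M0_ext: "\<forall>B \<in> sets borel. B \<subseteq> unit_ival \<longrightarrow> emeasure M0 B = emeasure lborel B"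
    and M1_ext: "\<forall>B \<in> sets borel. B \<subseteq> unit_ival \<longrightarrow> emeasure M1 B = emeasure lborel B"
    and M01_V: "emeasure M0 V \<noteq> emeasure M1 V"
    and q_enum: "bij_betw q UNIV (\<rat> \<inter> unit_ival)"
    and alpha_0: "\<forall>n. alpha n ord0 = ord0"
    and alpha_succ: "\<forall>n eta z. is_succ_of eta z \<longrightarrow> alpha n eta = z"
    and alpha_lim: "\<forall>l. is_limit l \<longrightarrow>
          strict_mono (\<lambda>n. alpha n l) \<and> (\<forall>n. alpha n l \<noteq> ord0 \<and> alpha n l < l) \<and>
          (\<forall>g. g < l \<longrightarrow> (\<exists>n. g \<le> alpha n l))"
  shows "(\<forall>xi eta. xi \<le> eta \<longrightarrow>
            (\<forall>A \<in> Giter M0 M1 q alpha Lambda0 xi. sect A eta \<in> sets borel))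
       \<and> (\<forall>xi z eta. is_succ_of eta z \<and> xi < eta \<longrightarrow>
            (\<forall>A \<in> Giter M0 M1 q alpha Lambda0 xi. sect A eta = {} \<or> sect A eta = unit_ival))"
proof -
  have agree: "measure M0 B = measure M1 B" if "B \<in> sets (restrict_space borel unit_ival)" for B
    using M0_ext M1_ext that by (simp add: measure_def sets_restrict_borel_ival)
  have eventually_above: "\<exists>m. \<forall>n\<ge>m. g \<le> alpha n e" if "g < e" for g e
    using alpha_succ alpha_lim that
    by (intro alpha_eventually_ge[of alpha]) (auto simp: strict_mono_mono)
  have regular: "regular_sections xi (Giter M0 M1 q alpha Lambda0 xi)" for xi
  proof (induction xi rule: less_induct)
    case (less xi)
    show ?case
    proof (cases xi rule: ord0_succ_or_limit)
      case 1
      then show ?thesis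
        by (simp add: Giter_ord0 regular_sections_Lambda0)
    next
      case (2 z)
      then show ?thesis
        using less[OF is_succ_of_less[OF 2]] alpha_succ
        by (simp add: Giter_succ regular_sections_Gop[OF M0_space agree eventually_above])
    next
      case 3
      then show ?thesis
        using less by (simp add: Giter_limit regular_sections_sigma_sets)
    qed
  qed
  then show ?thesis
    unfolding regular_sections_def sets_restrict_borel_ival by blast
qed

end
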